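(* Let $f\in\mathbb R[x_1,\dots,x_n]$ be a polynomial satisfying conditions (C1), (C2) and (C3), and let $\lambda_f$ be a map of minimal barycentric coordinates of $f$. Suppose that for every $\alpha\in V(f)$ the inequality \[ f_{\alpha}\;>\;\sum_{\alpha^\star\in D(f)\cap (2\mathbb N_0^n)^c}|f_{\alpha^\star}|\,\lambda_f(\alpha^\star,\alpha)\;-\;\sum_{\alpha^\star\in D(f)\cap 2\mathbb N_0^n}\min\{0,f_{\alpha^\star}\}\,\lambda_f(\alpha^\star,\alpha) \] holds. Then $f$ is coercive on $\mathbb R^n$, i.e. $f(x)\to+\infty$ whenever $\|x\|\to+\infty$.
   Context: Notation: $\mathbb N_0=\mathbb N\cup\{0\}$, $[n]=\{1,\dots,n\}$, $e_i$ the standard unit vectors, $(2\mathbb N_0^n)^c=\mathbb N_0^n\setminus 2\mathbb N_0^n$. Write $f(x)=\sum_{\alpha\in A(f)}f_\alpha x^\alpha$ with $A(f)\subseteq\mathbb N_0^n$ finite and $f_\alpha\neq0$ for $\alpha\in A(f)$. The Newton polytope at infinity is $\mathrm{New}_\infty(f)=\mathrm{conv}(A(f)\cup\{0\})$; $V_0(f)$ is its vertex set (it contains $0$), $V(f)=V_0(f)\setminus\{0\}$ (vertices at infinity), $V_0^c(f)=A(f)\setminus V_0(f)$, $V^c(f)=A(f)\setminus V(f)$. Conditions: (C1) $V(f)\subset 2\mathbb N_0^n$; (C2) $f_\alpha>0$ for all $\alpha\in V(f)$; (C3) for every $i\in[n]$, $V(f)$ contains a vector $2k_ie_i$ with $k_i\in\mathbb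 N$. Let $\mathcal G(f)$ be the set of nonempty faces $G$ of $\mathrm{New}_\infty(f)$ with $0\notin G$. An exponent $\alpha\in A(f)$ is gem degenerate if $\alpha\in V^c(f)\cap G$ for some $G\in\mathcal G(f)$; $D(f)$ denotes the set of gem degenerate exponents. A map of minimal barycentric coordinates of $f$ is a map $\lambda_f:V_0^c(f)\times V_0(f)\to[0,1]$ such that for each $\alpha^\star\in V_0^c(f)$ there is an affinely independent set $W_{\alpha^\star}\subseteq V_0(f)$ with $\lambda_f(\alpha^\star,\alpha)>0$ for $\alpha\in W_{\alpha^\star}$, $\lambda_f(\alpha^\star,\alpha)=0$ for $\alpha\in V_0(f)\setminus W_{\alpha^\star}$, and $\sum_{\alpha\in W_{\alpha^\star}}\lambda_f(\alpha^\star,\alpha)(\alpha,1)=(\alpha^\star,1)$. (Note $D(f)\subseteq V_0^c(f)$ under (C3).) *)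

theory Defs
  imports "HOL-Analysis.Analysis"
begin

text \<open>A real polynomial in n variables is represented by its coefficient function
  c :: nat^'n => real with finite support; exponents are vectors in nat^'n,
  points are vectors in real^'n (n = CARD('n)).\<close>

definition poly_eval :: "(nat^'n::finite \<Rightarrow> real) \<Rightarrow> real^'n \<Rightarrow> real" where
  "poly_eval c x = (\<Sum>\<alpha>\<in>{\<alpha>. c \<alpha> \<noteq> 0}. c \<alpha> * (\<Prod>i\<in>UNIV. (x $ i) ^ (\<alpha> $ i)))"

definition supp :: "(nat^'n::finite \<Rightarrow> real) \<Rightarrow> (nat^'n) set" where
  "supp c = {\<alpha>. c \<alpha> \<noteq> 0}"

definition emb :: "nat^'n::finite \<Rightarrow> real^'n" where
  "emb \<alpha> = (\<chi> i. real (\<alpha> $ i))"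

definition NewInf :: "(nat^'n::finite \<Rightarrow> real) \<Rightarrow> (real^'n) set" where
  "NewInf c = convex hull (emb ` supp c \<union> {0})"

definition V0 :: "(nat^'n::finite \<Rightarrow> real) \<Rightarrow> (nat^'n) set" where
  "V0 c = {\<alpha>. \<alpha> \<in> supp c \<union> {0} \<and> emb \<alpha> extreme_point_of NewInf c}"

definition Vinf :: "(nat^'n::finite \<Rightarrow> real) \<Rightarrow> (nat^'n) set" where
  "Vinf c = V0 c - {0}"

definition V0c :: "(nat^'n::finite \<Rightarrow> real) \<Rightarrow> (nat^'n) set" where
  "V0c c = supp c - V0 c"

definition Vc :: "(nat^'n::finite \<Rightarrow> real) \<Rightarrow> (nat^'n) set" where
  "Vc c = supp c - Vinf c"

definition even_vec :: "nat^'n::finite \<Rightarrow> bool" where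
  "even_vec \<alpha> \<longleftrightarrow> (\<forall>i. even (\<alpha> $ i))"

definition Dgem :: "(nat^'n::finite \<Rightarrow> real) \<Rightarrow> (nat^'n) set" where
  "Dgem c = {\<alpha> \<in> Vc c. \<exists>G. G face_of NewInf c \<and> G \<noteq> {} \<and> 0 \<notin> G \<and> emb \<alpha> \<in> G}"

definition C1 :: "(nat^'n::finite \<Rightarrow> real) \<Rightarrow> bool" where
  "C1 c \<longleftrightarrow> (\<forall>\<alpha>\<in>Vinf c. even_vec \<alpha>)"

definition C2 :: "(nat^'n::finite \<Rightarrow> real) \<Rightarrow> bool" where
  "C2 c \<longleftrightarrow> (\<forall>\<alpha>\<in>Vinf c. c \<alpha> > 0)"

definition C3 :: "(nat^'n::finite \<Rightarrow> real) \<Rightarrow> bool" where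
  "C3 c \<longleftrightarrow> (\<forall>i. \<exists>k::nat. k \<ge> 1 \<and> (\<chi> j. if j = i then 2 * k else 0) \<in> Vinf c)"

text \<open>Map of minimal barycentric coordinates (only values on V0c(f) x V0(f) matter).\<close>
definition min_bary_map ::
  "(nat^'n::finite \<Rightarrow> real) \<Rightarrow> (nat^'n \<Rightarrow> nat^'n \<Rightarrow> real) \<Rightarrow> bool" where
  "min_bary_map c lam \<longleftrightarrow>
     (\<forall>a\<in>V0c c. \<forall>\<alpha>\<in>V0 c. 0 \<le> lam a \<alpha> \<and> lam a \<alpha> \<le> 1) \<and>
     (\<forall>a\<in>V0c c. \<exists>W. W \<subseteq> V0 c \<and> \<not> affine_dependent (emb ` W) \<and>
        (\<forall>\<alpha>\<in>W. lam a \<alpha> > 0) \<and> (\<forall>\<alpha>\<in>V0 c - W. lam a \<alpha> = 0) \<and>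
        (\<Sum>\<alpha>\<in>W. lam a \<alpha> *\<^sub>R emb \<alpha>) = emb a \<and> (\<Sum>\<alpha>\<in>W. lam a \<alpha>) = 1)"

end

theory Submission
  imports Defs
begin

text \<open>Write y = |x| componentwise and S(y) for the sum of the monomials y^\<alpha> over the vertices
  at infinity. By (C1) every vertex term equals c_\<alpha> y^\<alpha>. For a gem degenerate exponent a,
  weighted AM-GM with the barycentric coordinates gives y^a \<le> 1 + \<Sum>_\<alpha> \<lambda>(a,\<alpha>) y^\<alpha>,
  so the worst case of c_a x^a is charged to the vertices, and the hypothesis leaves
  f(x) \<ge> \<epsilon> S(y) - K' - (remaining terms). Every remaining exponent \<beta> lies on no face
  avoiding 0, so t\<beta> is still in the Newton polytope for some t > 1; AM-GM then gives
  (y^\<beta>)^t \<le> 1 + S(y), hence y^\<beta> = o(S(y)). Thus f \<ge> \<epsilon>/2 S - K, and S is coercive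
  because by (C3) it dominates |x_i|^(2k_i) for each i.\<close>

section \<open>Weighted AM-GM for monomials with real exponents\<close>

text \<open>The case split makes y^0 = 1 also for y = 0, where Isabelle has 0 powr 0 = 0.\<close>
definition multipowr :: "real^'n::finite \<Rightarrow> real^'n \<Rightarrow> real" where
  "multipowr y e = (\<Prod>i\<in>UNIV. if e $ i = 0 then 1 else (y $ i) powr (e $ i))"

lemma multipowr_nonneg: "0 \<le> multipowr y e"
  unfolding multipowr_def by (intro prod_nonneg) auto

lemma multipowr_zero [simp]: "multipowr y 0 = 1"
  by (simp add: multipowr_def)

lemma multipowr_scaleR:
  assumes "0 < t"
  shows "multipowr y (t *\<^sub>R e) = multipowr y e powr t"
  unfolding multipowr_def prod_powr_distrib
  by (rule prod.cong) (use assms in \<open>auto simp: powr_powr mult.commute\<close>)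

lemma multipowr_eq_exp_sum:
  assumes "\<forall>i. 0 < y $ i"
  shows "multipowr y e = exp (\<Sum>i\<in>UNIV. e $ i * ln (y $ i))"
proof -
  have "multipowr y e = (\<Prod>i\<in>UNIV. exp (e $ i * ln (y $ i)))"
    unfolding multipowr_def
  proof (rule prod.cong)
    fix i
    have "y $ i \<noteq> 0" using assms by (metis less_irrefl)
    then show "(if e $ i = 0 then 1 else y $ i powr e $ i) = exp (e $ i * ln (y $ i))"
      by (simp add: powr_def mult.commute)
  qed simp
  then show ?thesis by (simp add: exp_sum)
qed

lemma multipowr_convex_combination_le_pos:
  fixes g :: "'j \<Rightarrow> real^'n::finite"
  assumes "finite I" and "\<forall>j\<in>I. 0 \<le> l j" and "sum l I = 1"
    and "\<forall>i. 0 < y $ i"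
  shows "multipowr y (\<Sum>j\<in>I. l j *\<^sub>R g j) \<le> (\<Sum>j\<in>I. l j * multipowr y (g j))"
proof -
  define L where "L e = (\<Sum>i\<in>UNIV. e $ i * ln (y $ i))" for e :: "real^'n"
  have "L (\<Sum>j\<in>I. l j *\<^sub>R g j) = (\<Sum>j\<in>I. l j * L (g j))"
    unfolding L_def
    by (simp add: sum_distrib_left sum_distrib_right sum.swap[of _ I] mult.assoc)
  moreover have "exp (\<Sum>j\<in>I. l j *\<^sub>R L (g j)) \<le> (\<Sum>j\<in>I. l j * exp (L (g j)))"
    using assms(3) by (intro convex_on_sum[OF assms(1) _ exp_convex]) (use assms(2) in auto)
  ultimately show ?thesis
    using assms(4) by (simp add: multipowr_eq_exp_sum L_def)
qed

text \<open>Coordinates with y i = 0 are harmless: either the left-hand side vanishes, or no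
  exponent of positive weight involves them and they may be replaced by 1.\<close>
lemma multipowr_convex_combination_le:
  fixes g :: "'j \<Rightarrow> real^'n::finite"
  assumes I: "finite I" and l: "\<forall>j\<in>I. 0 \<le> l j" and sum_l: "sum l I = 1"
    and g: "\<forall>j\<in>I. \<forall>i. 0 \<le> g j $ i" and y: "\<forall>i. 0 \<le> y $ i"
  shows "multipowr y (\<Sum>j\<in>I. l j *\<^sub>R g j) \<le> (\<Sum>j\<in>I. l j * multipowr y (g j))"
    (is "multipowr y ?e \<le> _")
proof (cases "\<exists>i. y $ i = 0 \<and> ?e $ i \<noteq> 0")
  case True
  then have "multipowr y ?e = 0"
    unfolding multipowr_def by (intro prod_zero) auto
  moreover have "0 \<le> (\<Sum>j\<in>I. l j * multipowr y (g j))"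
    using l by (intro sum_nonneg mult_nonneg_nonneg) (auto simp: multipowr_nonneg)
  ultimately show ?thesis by simp
next
  case False
  define y' where "y' = (\<chi> i. if y $ i = 0 then 1 else y $ i)"
  have y'_pos: "\<forall>i. 0 < y' $ i"
    unfolding y'_def using y by (auto simp: less_le)
  have g_vanishes: "g j $ i = 0" if "j \<in> I" "0 < l j" "y $ i = 0" for j i
  proof -
    have "(\<Sum>j\<in>I. l j * g j $ i) = 0"
      using False that(3) by simp
    then have "\<forall>j\<in>I. l j * g j $ i = 0"
      using sum_nonneg_eq_0_iff[OF I, of "\<lambda>j. l j * g j $ i"] l g by auto
    then show ?thesis using that(1,2) by force
  qed
  have "multipowr y ?e = multipowr y' ?e"
    unfolding multipowr_def y'_def by (rule prod.cong) (use False in auto)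
  also have "\<dots> \<le> (\<Sum>j\<in>I. l j * multipowr y' (g j))"
    by (rule multipowr_convex_combination_le_pos[OF I l sum_l y'_pos])
  also have "\<dots> = (\<Sum>j\<in>I. l j * multipowr y (g j))"
  proof (rule sum.cong)
    fix j assume "j \<in> I"
    show "l j * multipowr y' (g j) = l j * multipowr y (g j)"
    proof (cases "l j = 0")
      case False
      then have "multipowr y' (g j) = multipowr y (g j)"
        unfolding multipowr_def y'_def using l g_vanishes \<open>j \<in> I\<close> by (intro prod.cong) auto
      then show ?thesis by simp
    qed simp
  qed simp
  finally show ?thesis .
qed

section \<open>Growth conditions\<close>

lemma le_powr_plus_const:
  fixes t \<delta> :: real
  assumes t: "1 < t" and \<delta>: "0 < \<delta>"
  obtains C where "\<And>u. 0 \<le> u \<Longrightarrow> u \<le> \<delta> * u powr t + C"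
proof
  define C where "C = (1 / \<delta>) powr (1 / (t - 1))"
  fix u :: real assume u: "0 \<le> u"
  show "u \<le> \<delta> * u powr t + C"
  proof (cases "u \<le> C")
    case True
    then show ?thesis using \<delta> by (simp add: add_increasing)
  next
    case False
    have "0 \<le> C" by (simp add: C_def)
    with False have "0 < u" by simp
    have "1 / \<delta> = C powr (t - 1)"
      using \<delta> t by (simp add: C_def powr_powr)
    also have "\<dots> < u powr (t - 1)"
      using False t by (intro powr_less_mono2) (auto simp: C_def)
    finally have "1 < \<delta> * u powr (t - 1)"
      using \<delta> by (simp add: field_simps)
    then have "u < u * (\<delta> * u powr (t - 1))"
      using \<open>0 < u\<close> by simp
    also have "\<dots> = \<delta> * u powr t"
      using \<open>0 < u\<close> by (simp add: powr_mult_base)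
    finally show ?thesis using \<open>0 \<le> C\<close> by simp
  qed
qed

definition negligible_wrt :: "('a \<Rightarrow> real) \<Rightarrow> ('a \<Rightarrow> real) \<Rightarrow> bool" where
  "negligible_wrt S g \<longleftrightarrow> (\<forall>\<eta>>0. \<exists>C. \<forall>x. g x \<le> \<eta> * S x + C)"

lemma negligible_wrtD:
  assumes "negligible_wrt S g" "0 < \<eta>"
  obtains C where "\<And>x. g x \<le> \<eta> * S x + C"
  using assms unfolding negligible_wrt_def by blast

lemma negligible_wrt_add:
  assumes "negligible_wrt S f" "negligible_wrt S g"
  shows "negligible_wrt S (\<lambda>x. f x + g x)"
  unfolding negligible_wrt_def
proof (intro allI impI)
  fix \<eta> :: real assume "0 < \<eta>"
  then have "0 < \<eta> / 2" by simp
  obtain C where C: "\<And>x. f x \<le> \<eta> / 2 * S x + C"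
    using negligible_wrtD[OF assms(1) \<open>0 < \<eta> / 2\<close>] by blast
  obtain D where D: "\<And>x. g x \<le> \<eta> / 2 * S x + D"
    using negligible_wrtD[OF assms(2) \<open>0 < \<eta> / 2\<close>] by blast
  have "f x + g x \<le> \<eta> * S x + (C + D)" for x
    using add_mono[OF C[of x] D[of x]] by (simp add: field_simps)
  then show "\<exists>C. \<forall>x. f x + g x \<le> \<eta> * S x + C" by blast
qed

lemma negligible_wrt_cmult:
  assumes "negligible_wrt S g" "0 \<le> a" "\<And>x. 0 \<le> S x"
  shows "negligible_wrt S (\<lambda>x. a * g x)"
  unfolding negligible_wrt_def
proof (intro allI impI)
  fix \<eta> :: real assume "0 < \<eta>"
  show "\<exists>C. \<forall>x. a * g x \<le> \<eta> * S x + C"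
  proof (cases "a = 0")
    case True
    have "0 \<le> \<eta> * S x" for x
      using \<open>0 < \<eta>\<close> assms(3) by (simp add: mult_nonneg_nonneg)
    then show ?thesis using True by (intro exI[of _ 0]) simp
  next
    case False
    then have "0 < a" using assms(2) by simp
    then have "0 < \<eta> / a" using \<open>0 < \<eta>\<close> by simp
    then obtain C where C: "\<And>x. g x \<le> \<eta> / a * S x + C"
      using negligible_wrtD[OF assms(1)] by blast
    have "a * g x \<le> \<eta> * S x + a * C" for x
    proof -
      have "a * g x \<le> a * (\<eta> / a * S x + C)"
        using \<open>0 < a\<close> C by (intro mult_left_mono) auto
      also have "\<dots> = \<eta> * S x + a * C"
        using \<open>0 < a\<close> by (simp add: field_simps)
      finally show ?thesis .
    qed
    then show ?thesis by blast
  qed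
qed

lemma negligible_wrt_sum:
  assumes "finite A" "\<And>a. a \<in> A \<Longrightarrow> negligible_wrt S (g a)" "\<And>x. 0 \<le> S x"
  shows "negligible_wrt S (\<lambda>x. \<Sum>a\<in>A. g a x)"
  using assms(1,2)
proof (induction A rule: finite_induct)
  case empty
  then show ?case
    unfolding negligible_wrt_def using assms(3) by (auto intro!: exI[of _ 0])
next
  case (insert a A)
  have "negligible_wrt S (\<lambda>x. \<Sum>b\<in>A. g b x)"
    by (rule insert.IH) (rule insert.prems, simp)
  then have "negligible_wrt S (\<lambda>x. g a x + (\<Sum>b\<in>A. g b x))"
    by (intro negligible_wrt_add insert.prems) simp
  then show ?case using insert.hyps by simp
qed

lemma filterlim_at_infinity_if_coordinate_bound:
  fixes S :: "real^'n::finite \<Rightarrow> real"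
  assumes S: "\<And>x i. 1 \<le> \<bar>x $ i\<bar> \<Longrightarrow> \<bar>x $ i\<bar> \<le> S x"
  shows "filterlim S at_top at_infinity"
  unfolding filterlim_at_top eventually_at_infinity
proof
  fix Z :: real
  define T where "T = max 1 Z"
  have "Z \<le> S x" if "real CARD('n) * T \<le> norm x" for x
  proof -
    define M where "M = Max (range (\<lambda>j. \<bar>x $ j\<bar>))"
    have "M \<in> range (\<lambda>j. \<bar>x $ j\<bar>)"
      unfolding M_def by (rule Max_in) auto
    then obtain i where "\<bar>x $ i\<bar> = M" by blast
    have "norm x \<le> (\<Sum>j\<in>UNIV. \<bar>x $ j\<bar>)"
      by (rule norm_le_l1_cart)
    also have "\<dots> \<le> real CARD('n) * M"
      unfolding M_def by (rule sum_bounded_above) simp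
    finally have "real CARD('n) * T \<le> real CARD('n) * M"
      using that by linarith
    then have "T \<le> \<bar>x $ i\<bar>"
      using \<open>\<bar>x $ i\<bar> = M\<close> by simp
    then show "Z \<le> S x"
      using S[of x i] by (simp add: T_def)
  qed
  then show "\<exists>b. \<forall>x. b \<le> norm x \<longrightarrow> Z \<le> S x" by blast
qed

section \<open>Faces of polytopes\<close>

lemma polytope_point_in_rel_interior_face:
  fixes P :: "'a::euclidean_space set"
  assumes "polytope P" "b \<in> P"
  shows "\<exists>F. F face_of P \<and> b \<in> rel_interior F"
  using assms
proof (induction "nat (aff_dim P + 1)" arbitrary: P rule: less_induct)
  case less
  show ?case
  proof (cases "b \<in> rel_interior P")
    case True
    then show ?thesis using face_of_refl[OF polytope_imp_convex[OF less.prems(1)]] by blast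
  next
    case False
    moreover have "b \<in> closure P" using closure_subset less.prems(2) by blast
    ultimately have "b \<in> rel_frontier P" by (simp add: rel_frontier_def)
    then obtain F where F: "F face_of P" "F \<noteq> P" "b \<in> F"
      unfolding rel_frontier_of_polyhedron_alt[OF polytope_imp_polyhedron[OF less.prems(1)]]
      by blast
    have "aff_dim F < aff_dim P"
      by (rule face_of_aff_dim_lt[OF polytope_imp_convex[OF less.prems(1)] F(1,2)])
    moreover have "-1 \<le> aff_dim F" by (rule aff_dim_geq)
    ultimately have smaller: "nat (aff_dim F + 1) < nat (aff_dim P + 1)" by linarith
    obtain G where "G face_of F" "b \<in> rel_interior G"
      using less.hyps[OF smaller face_of_polytope_polytope[OF less.prems(1) F(1)] F(3)] by blast
    then show ?thesis using face_of_trans F(1) by blast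
  qed
qed

text \<open>In the face having b in its relative interior, 0 would allow the segment from 0 to b to
  be prolonged beyond b.\<close>
lemma polytope_face_avoiding_origin:
  fixes P :: "'a::euclidean_space set"
  assumes "polytope P" "b \<in> P" "\<forall>t>1. t *\<^sub>R b \<notin> P"
  shows "\<exists>G. G face_of P \<and> b \<in> G \<and> 0 \<notin> G"
proof -
  obtain F where F: "F face_of P" "b \<in> rel_interior F"
    using polytope_point_in_rel_interior_face assms(1,2) by blast
  have "0 \<notin> F"
  proof
    assume "0 \<in> F"
    then have "0 \<in> affine hull F" by (rule hull_inc)
    then obtain t where "1 < t" "(1 - t) *\<^sub>R 0 + t *\<^sub>R b \<in> F"
      using convex_rel_interior_if2[OF face_of_imp_convex[OF F(1)] F(2)] by blast
    then show False using assms(3) face_of_imp_subset[OF F(1)] by auto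
  qed
  then show ?thesis using F rel_interior_subset by blast
qed

section \<open>Monomials and the Newton polytope at infinity\<close>

lemma abs_vec_nth [simp]:
  fixes x :: "'a::ordered_euclidean_space ^ 'n"
  shows "\<bar>x\<bar> $ i = \<bar>x $ i\<bar>"
  by (simp add: abs_vec_def)

definition multipow :: "real^'n::finite \<Rightarrow> nat^'n \<Rightarrow> real" where
  "multipow x \<beta> = (\<Prod>i\<in>UNIV. (x $ i) ^ (\<beta> $ i))"

lemma poly_eval_eq_sum_multipow: "poly_eval c x = (\<Sum>\<beta>\<in>supp c. c \<beta> * multipow x \<beta>)"
  by (simp add: poly_eval_def supp_def multipow_def)

lemma multipowr_abs_emb: "multipowr \<bar>x\<bar> (emb \<beta>) = \<bar>multipow x \<beta>\<bar>"
  unfolding multipowr_def multipow_def emb_def abs_prod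
  by (rule prod.cong) (auto simp: powr_realpow' power_abs)

lemma multipow_even: "even_vec \<beta> \<Longrightarrow> multipow x \<beta> = \<bar>multipow x \<beta>\<bar>"
  unfolding multipow_def even_vec_def by (simp add: abs_prod power_abs power_even_abs)

lemma multipow_axis: "multipow x (\<chi> j. if j = i then m else 0) = x $ i ^ m"
proof -
  have "multipow x (\<chi> j. if j = i then m else 0) = (\<Prod>j\<in>UNIV. if j = i then x $ j ^ m else 1)"
    unfolding multipow_def by (rule prod.cong) auto
  then show ?thesis by (simp add: prod.delta)
qed

lemma emb_0 [simp]: "emb 0 = 0"
  by (simp add: emb_def vec_eq_iff)

lemma inj_emb: "inj emb"
  by (auto simp: inj_def emb_def vec_eq_iff)

lemma emb_nonneg: "0 \<le> emb \<beta> $ i"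
  by (simp add: emb_def)

lemma V0_subset: "V0 c \<subseteq> supp c \<union> {0}"
  by (auto simp: V0_def)

lemma Vinf_subset_supp: "Vinf c \<subseteq> supp c"
  by (auto simp: Vinf_def V0_def)

lemma Dgem_subset_supp: "Dgem c \<subseteq> supp c"
  by (auto simp: Dgem_def Vc_def)

lemma Dgem_Int_Vinf: "Dgem c \<inter> Vinf c = {}"
  by (auto simp: Dgem_def Vc_def)

lemma finite_V0: "finite (supp c) \<Longrightarrow> finite (V0 c)"
  using V0_subset finite_subset by blast

lemma finite_Vinf: "finite (supp c) \<Longrightarrow> finite (Vinf c)"
  using Vinf_subset_supp finite_subset by blast

lemma finite_Dgem: "finite (supp c) \<Longrightarrow> finite (Dgem c)"
  using Dgem_subset_supp finite_subset by blast

lemma Dgem_subset_V0c: "Dgem c \<subseteq> V0c c"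
proof
  fix a assume "a \<in> Dgem c"
  then obtain G where "a \<in> supp c" "a \<notin> Vinf c" "emb a \<in> G" "0 \<notin> G"
    by (auto simp: Dgem_def Vc_def)
  then show "a \<in> V0c c" by (auto simp: V0c_def Vinf_def)
qed

lemma sum_V0_le:
  fixes f :: "nat^'n::finite \<Rightarrow> real"
  assumes "finite (supp c)" "0 \<in> V0 c \<Longrightarrow> f 0 \<le> 1"
  shows "sum f (V0 c) \<le> 1 + sum f (Vinf c)"
  using sum_diff1[OF finite_V0[OF assms(1)], of f 0] assms(2) by (auto simp: Vinf_def)

lemma NewInf_eq_convex_hull_V0:
  assumes "finite (supp c)"
  shows "NewInf c = convex hull (emb ` V0 c)"
proof -
  define T where "T = emb ` supp c \<union> {0}"
  have T: "NewInf c = convex hull T"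
    by (simp add: NewInf_def T_def)
  have "finite T"
    using assms by (simp add: T_def)
  have extreme_points: "{x. x extreme_point_of convex hull T} = emb ` V0 c"
  proof (intro set_eqI iffI)
    fix x assume "x \<in> {x. x extreme_point_of convex hull T}"
    then have x: "x extreme_point_of convex hull T" by simp
    then have "x \<in> T" by (rule extreme_point_of_convex_hull)
    have "\<exists>\<alpha>\<in>supp c \<union> {0}. x = emb \<alpha>"
    proof (cases "x = 0")
      case True
      then show ?thesis by (intro bexI[of _ 0]) auto
    next
      case False
      with \<open>x \<in> T\<close> show ?thesis by (auto simp: T_def)
    qed
    then obtain \<alpha> where \<alpha>: "\<alpha> \<in> supp c \<union> {0}" "x = emb \<alpha>" by blast
    with x T have "\<alpha> \<in> V0 c"
      unfolding V0_def by simp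
    with \<alpha>(2) show "x \<in> emb ` V0 c" by simp
  next
    fix x assume "x \<in> emb ` V0 c"
    then have "x extreme_point_of NewInf c"
      unfolding V0_def by blast
    with T show "x \<in> {x. x extreme_point_of convex hull T}" by simp
  qed
  have "NewInf c = convex hull {x. x extreme_point_of convex hull T}"
    using T Krein_Milman_polytope[OF \<open>finite T\<close>] by (rule trans)
  then show ?thesis
    unfolding extreme_points .
qed

definition vertex_sum :: "(nat^'n::finite \<Rightarrow> real) \<Rightarrow> real^'n \<Rightarrow> real" where
  "vertex_sum c y = (\<Sum>\<alpha>\<in>Vinf c. multipowr y (emb \<alpha>))"

lemma vertex_sum_nonneg: "0 \<le> vertex_sum c y"
  unfolding vertex_sum_def by (intro sum_nonneg multipowr_nonneg)

lemma multipowr_le_on_NewInf: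
  assumes fin: "finite (supp c)" and p: "p \<in> NewInf c" and y: "\<forall>i. 0 \<le> y $ i"
  shows "multipowr y p \<le> 1 + vertex_sum c y"
proof -
  have fin_V: "finite (emb ` V0 c)"
    using finite_V0[OF fin] by simp
  obtain u where u: "\<forall>q\<in>emb ` V0 c. 0 \<le> u q" "sum u (emb ` V0 c) = 1"
    and p_eq: "p = (\<Sum>q\<in>emb ` V0 c. u q *\<^sub>R q)"
    using p unfolding NewInf_eq_convex_hull_V0[OF fin] convex_hull_finite[OF fin_V] by auto
  have "\<forall>q\<in>emb ` V0 c. \<forall>i. 0 \<le> q $ i"
    by (simp add: emb_nonneg)
  then have "multipowr y p \<le> (\<Sum>q\<in>emb ` V0 c. u q * multipowr y q)"
    unfolding p_eq by (rule multipowr_convex_combination_le[where g = "\<lambda>q. q", OF fin_V u _ y])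
  also have "\<dots> \<le> (\<Sum>q\<in>emb ` V0 c. multipowr y q)"
  proof (rule sum_mono)
    fix q assume q: "q \<in> emb ` V0 c"
    have "0 \<le> u q" using u(1) q by blast
    have "u q \<le> sum u (emb ` V0 c)"
      by (rule member_le_sum[OF q]) (use u(1) fin_V in auto)
    then have "u q \<le> 1" using u(2) by simp
    with \<open>0 \<le> u q\<close> show "u q * multipowr y q \<le> multipowr y q"
      by (rule mult_left_le_one_le[OF multipowr_nonneg])
  qed
  also have "\<dots> = (\<Sum>\<alpha>\<in>V0 c. multipowr y (emb \<alpha>))"
    by (rule sum.reindex[OF inj_on_subset[OF inj_emb], simplified])
  also have "\<dots> \<le> 1 + vertex_sum c y"
    unfolding vertex_sum_def using sum_V0_le[OF fin, of "\<lambda>\<alpha>. multipowr y (emb \<alpha>)"] by simp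
  finally show ?thesis .
qed

lemma multipowr_V0c_le:
  assumes fin: "finite (supp c)" and mb: "min_bary_map c lam" and a: "a \<in> V0c c"
    and y: "\<forall>i. 0 \<le> y $ i"
  shows "multipowr y (emb a) \<le> 1 + (\<Sum>v\<in>Vinf c. lam a v * multipowr y (emb v))"
proof -
  obtain W where W: "W \<subseteq> V0 c" "\<forall>\<alpha>\<in>W. 0 < lam a \<alpha>" "\<forall>\<alpha>\<in>V0 c - W. lam a \<alpha> = 0"
    "(\<Sum>\<alpha>\<in>W. lam a \<alpha> *\<^sub>R emb \<alpha>) = emb a" "(\<Sum>\<alpha>\<in>W. lam a \<alpha>) = 1"
    using mb a unfolding min_bary_map_def by blast
  have lam_le_1: "lam a 0 \<le> 1" if "0 \<in> V0 c"
    using mb a that unfolding min_bary_map_def by blast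
  have fin_W: "finite W"
    using W(1) finite_V0[OF fin] finite_subset by blast
  have "multipowr y (\<Sum>v\<in>W. lam a v *\<^sub>R emb v) \<le> (\<Sum>v\<in>W. lam a v * multipowr y (emb v))"
    by (rule multipowr_convex_combination_le[OF fin_W _ W(5) _ y])
      (use W(2) in \<open>auto simp: less_imp_le emb_nonneg\<close>)
  then have "multipowr y (emb a) \<le> (\<Sum>v\<in>W. lam a v * multipowr y (emb v))"
    unfolding W(4) .
  also have "\<dots> = (\<Sum>v\<in>V0 c. lam a v * multipowr y (emb v))"
    by (rule sum.mono_neutral_left) (use W(1,3) finite_V0[OF fin] in auto)
  also have "\<dots> \<le> 1 + (\<Sum>v\<in>Vinf c. lam a v * multipowr y (emb v))"
    by (rule sum_V0_le[OF fin]) (use lam_le_1 in simp)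
  finally show ?thesis .
qed

section \<open>Lower bound by the vertex sum\<close>

lemma stretch_in_NewInf:
  assumes fin: "finite (supp c)" and \<beta>: "\<beta> \<in> supp c" "\<beta> \<notin> Vinf c" "\<beta> \<notin> Dgem c"
  shows "\<exists>t>1. t *\<^sub>R emb \<beta> \<in> NewInf c"
proof (rule ccontr)
  assume "\<not> ?thesis"
  moreover have "polytope (NewInf c)"
    unfolding NewInf_def using fin by (simp add: polytope_convex_hull)
  moreover have "emb \<beta> \<in> NewInf c"
    unfolding NewInf_def using \<beta>(1) by (intro hull_inc) simp
  ultimately obtain G where "G face_of NewInf c" "emb \<beta> \<in> G" "0 \<notin> G"
    using polytope_face_avoiding_origin by blast
  then have "\<beta> \<in> Dgem c"
    using \<beta>(1,2) unfolding Dgem_def Vc_def by blast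
  with \<beta>(3) show False by contradiction
qed

lemma multipow_negligible:
  assumes fin: "finite (supp c)" and \<beta>: "\<beta> \<in> supp c" "\<beta> \<notin> Vinf c" "\<beta> \<notin> Dgem c"
  shows "negligible_wrt (\<lambda>x. vertex_sum c \<bar>x\<bar>) (\<lambda>x. \<bar>multipow x \<beta>\<bar>)"
  unfolding negligible_wrt_def
proof (intro allI impI)
  fix \<eta> :: real assume "0 < \<eta>"
  obtain t where t: "1 < t" "t *\<^sub>R emb \<beta> \<in> NewInf c"
    using stretch_in_NewInf[OF fin \<beta>] by blast
  obtain C where C: "\<And>u. 0 \<le> u \<Longrightarrow> u \<le> \<eta> * u powr t + C"
    using le_powr_plus_const[OF t(1) \<open>0 < \<eta>\<close>] by blast
  have "\<bar>multipow x \<beta>\<bar> \<le> \<eta> * vertex_sum c \<bar>x\<bar> + (\<eta> + C)" for x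
  proof -
    have "\<bar>multipow x \<beta>\<bar> powr t = multipowr \<bar>x\<bar> (t *\<^sub>R emb \<beta>)"
      using t(1) by (simp add: multipowr_scaleR multipowr_abs_emb)
    also have "\<dots> \<le> 1 + vertex_sum c \<bar>x\<bar>"
      by (rule multipowr_le_on_NewInf[OF fin t(2)]) simp
    finally have "\<eta> * \<bar>multipow x \<beta>\<bar> powr t \<le> \<eta> * (1 + vertex_sum c \<bar>x\<bar>)"
      using \<open>0 < \<eta>\<close> by simp
    then show ?thesis
      using C[of "\<bar>multipow x \<beta>\<bar>"] by (simp add: algebra_simps)
  qed
  then show "\<exists>C. \<forall>x. \<bar>multipow x \<beta>\<bar> \<le> \<eta> * vertex_sum c \<bar>x\<bar> + C" by blast
qed

text \<open>The coefficient with which a gem degenerate exponent a is charged to the vertex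
  \<alpha> in the hypothesis of the theorem.\<close>
definition gem_weight ::
  "(nat^'n::finite \<Rightarrow> real) \<Rightarrow> (nat^'n \<Rightarrow> nat^'n \<Rightarrow> real) \<Rightarrow> nat^'n \<Rightarrow> nat^'n \<Rightarrow> real" where
  "gem_weight c lam a \<alpha> = (if even_vec a then - min 0 (c a) else \<bar>c a\<bar>) * lam a \<alpha>"

lemma sum_gem_weight:
  assumes "finite (supp c)"
  shows "(\<Sum>a\<in>Dgem c. gem_weight c lam a \<alpha>) =
    (\<Sum>a\<in>{a\<in>Dgem c. \<not> even_vec a}. \<bar>c a\<bar> * lam a \<alpha>)
    - (\<Sum>a\<in>{a\<in>Dgem c. even_vec a}. min 0 (c a) * lam a \<alpha>)"
proof -
  have "(\<Sum>a\<in>Dgem c. gem_weight c lam a \<alpha>) =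
      (\<Sum>a\<in>{a\<in>Dgem c. even_vec a}. - min 0 (c a) * lam a \<alpha>)
      + (\<Sum>a\<in>{a\<in>Dgem c. \<not> even_vec a}. \<bar>c a\<bar> * lam a \<alpha>)"
    unfolding gem_weight_def if_distrib[of "\<lambda>z. z * lam _ \<alpha>"]
    using finite_Dgem[OF assms] by (simp add: sum.If_cases Int_def conj_commute)
  then show ?thesis by (simp add: sum_negf)
qed

lemma degenerate_term_ge:
  assumes fin: "finite (supp c)" and mb: "min_bary_map c lam" and a: "a \<in> Dgem c"
  shows "- (\<Sum>\<alpha>\<in>Vinf c. gem_weight c lam a \<alpha> * multipowr \<bar>x\<bar> (emb \<alpha>)) - \<bar>c a\<bar>
    \<le> c a * multipow x a"
proof -
  define A where "A = (\<Sum>\<alpha>\<in>Vinf c. lam a \<alpha> * multipowr \<bar>x\<bar> (emb \<alpha>))"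
  define m where "m = \<bar>multipow x a\<bar>"
  define k where "k = (if even_vec a then - min 0 (c a) else \<bar>c a\<bar>)"
  have k: "0 \<le> k" "k \<le> \<bar>c a\<bar>"
    by (auto simp: k_def)
  have "a \<in> V0c c"
    using a Dgem_subset_V0c by blast
  then have "m \<le> 1 + A"
    unfolding m_def A_def multipowr_abs_emb[symmetric]
    by (rule multipowr_V0c_le[OF fin mb]) simp
  then have "k * m \<le> k * (1 + A)"
    using k(1) by (rule mult_left_mono)
  then have "k * m \<le> k + k * A"
    by (simp add: algebra_simps)
  moreover have "- (k * m) \<le> c a * multipow x a"
  proof (cases "even_vec a")
    case True
    then have "multipow x a = m"
      unfolding m_def by (rule multipow_even)
    moreover have "min 0 (c a) * m \<le> c a * m"
      by (intro mult_right_mono) (auto simp: m_def)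
    ultimately show ?thesis using True by (simp add: k_def)
  next
    case False
    have "- (\<bar>c a\<bar> * m) \<le> c a * multipow x a"
      unfolding m_def by (simp add: abs_mult[symmetric])
    then show ?thesis using False by (simp add: k_def)
  qed
  moreover have "(\<Sum>\<alpha>\<in>Vinf c. gem_weight c lam a \<alpha> * multipowr \<bar>x\<bar> (emb \<alpha>)) = k * A"
    unfolding A_def gem_weight_def k_def by (simp add: sum_distrib_left mult.assoc)
  ultimately show ?thesis
    using k(2) by linarith
qed

lemma poly_eval_split:
  assumes fin: "finite (supp c)"
  shows "poly_eval c x = (\<Sum>\<alpha>\<in>Vinf c. c \<alpha> * multipow x \<alpha>) + (\<Sum>a\<in>Dgem c. c a * multipow x a)
    + (\<Sum>\<beta>\<in>supp c - Vinf c - Dgem c. c \<beta> * multipow x \<beta>)"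
proof -
  define R where "R = supp c - Vinf c - Dgem c"
  have "supp c = Vinf c \<union> Dgem c \<union> R"
    using Vinf_subset_supp Dgem_subset_supp unfolding R_def by blast
  moreover have "finite (Vinf c)" "finite (Dgem c)" "finite R"
    using fin finite_Vinf finite_Dgem unfolding R_def by auto
  moreover have "Vinf c \<inter> Dgem c = {}" "(Vinf c \<union> Dgem c) \<inter> R = {}"
    using Dgem_Int_Vinf unfolding R_def by blast+
  ultimately show ?thesis
    unfolding poly_eval_eq_sum_multipow R_def[symmetric] by (simp add: sum.union_disjoint)
qed

lemma vertex_and_degenerate_terms_ge:
  assumes fin: "finite (supp c)" and C1: "C1 c" and mb: "min_bary_map c lam"
  shows "(\<Sum>\<alpha>\<in>Vinf c. (c \<alpha> - (\<Sum>a\<in>Dgem c. gem_weight c lam a \<alpha>)) * multipowr \<bar>x\<bar> (emb \<alpha>))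
      - (\<Sum>a\<in>Dgem c. \<bar>c a\<bar>)
    \<le> (\<Sum>\<alpha>\<in>Vinf c. c \<alpha> * multipow x \<alpha>) + (\<Sum>a\<in>Dgem c. c a * multipow x a)"
proof -
  have "(\<Sum>\<alpha>\<in>Vinf c. c \<alpha> * multipow x \<alpha>) = (\<Sum>\<alpha>\<in>Vinf c. c \<alpha> * multipowr \<bar>x\<bar> (emb \<alpha>))"
  proof (rule sum.cong)
    fix \<alpha> assume "\<alpha> \<in> Vinf c"
    then have "multipow x \<alpha> = \<bar>multipow x \<alpha>\<bar>"
      using C1 unfolding C1_def by (blast intro: multipow_even)
    then show "c \<alpha> * multipow x \<alpha> = c \<alpha> * multipowr \<bar>x\<bar> (emb \<alpha>)"
      by (simp add: multipowr_abs_emb)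
  qed simp
  moreover have "(\<Sum>a\<in>Dgem c. - (\<Sum>\<alpha>\<in>Vinf c. gem_weight c lam a \<alpha> * multipowr \<bar>x\<bar> (emb \<alpha>)) - \<bar>c a\<bar>)
      \<le> (\<Sum>a\<in>Dgem c. c a * multipow x a)"
    by (rule sum_mono) (rule degenerate_term_ge[OF fin mb])
  moreover have "(\<Sum>a\<in>Dgem c. - (\<Sum>\<alpha>\<in>Vinf c. gem_weight c lam a \<alpha> * multipowr \<bar>x\<bar> (emb \<alpha>)) - \<bar>c a\<bar>)
      = - (\<Sum>\<alpha>\<in>Vinf c. (\<Sum>a\<in>Dgem c. gem_weight c lam a \<alpha>) * multipowr \<bar>x\<bar> (emb \<alpha>))
        - (\<Sum>a\<in>Dgem c. \<bar>c a\<bar>)"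
    by (simp add: sum_subtractf sum_negf sum_distrib_right sum.swap[of _ "Dgem c"])
  ultimately show ?thesis
    by (simp add: left_diff_distrib sum_subtractf)
qed

lemma poly_eval_ge_vertex_sum:
  assumes fin: "finite (supp c)" and C1: "C1 c" and mb: "min_bary_map c lam"
    and dominant: "\<forall>\<alpha>\<in>Vinf c. c \<alpha> >
           (\<Sum>a\<in>{a\<in>Dgem c. \<not> even_vec a}. \<bar>c a\<bar> * lam a \<alpha>)
         - (\<Sum>a\<in>{a\<in>Dgem c. even_vec a}. min 0 (c a) * lam a \<alpha>)"
  shows "\<exists>\<epsilon>>0. \<exists>K. \<forall>x. \<epsilon> * vertex_sum c \<bar>x\<bar> - K \<le> poly_eval c x"
proof -
  define s where "s \<alpha> = (\<Sum>a\<in>Dgem c. gem_weight c lam a \<alpha>)" for \<alpha>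
  define \<epsilon> where "\<epsilon> = Min (insert 1 ((\<lambda>\<alpha>. c \<alpha> - s \<alpha>) ` Vinf c))"
  define R where "R = supp c - Vinf c - Dgem c"
  have fin_V: "finite (Vinf c)"
    using finite_Vinf[OF fin] .
  have "0 < \<epsilon>"
    unfolding \<epsilon>_def using fin_V dominant by (simp add: s_def sum_gem_weight[OF fin])
  have \<epsilon>_le: "\<epsilon> \<le> c \<alpha> - s \<alpha>" if "\<alpha> \<in> Vinf c" for \<alpha>
    unfolding \<epsilon>_def using fin_V that by (intro Min_le) auto
  have negligible: "negligible_wrt (\<lambda>x. vertex_sum c \<bar>x\<bar>) (\<lambda>x. \<Sum>\<beta>\<in>R. \<bar>c \<beta>\<bar> * \<bar>multipow x \<beta>\<bar>)"
    using fin by (intro negligible_wrt_sum negligible_wrt_cmult multipow_negligible)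
      (auto simp: R_def vertex_sum_nonneg)
  have "0 < \<epsilon> / 2" using \<open>0 < \<epsilon>\<close> by simp
  then obtain C where C: "\<And>x. (\<Sum>\<beta>\<in>R. \<bar>c \<beta>\<bar> * \<bar>multipow x \<beta>\<bar>) \<le> \<epsilon> / 2 * vertex_sum c \<bar>x\<bar> + C"
    using negligible_wrtD[OF negligible] by blast
  have "\<epsilon> / 2 * vertex_sum c \<bar>x\<bar> - (C + (\<Sum>a\<in>Dgem c. \<bar>c a\<bar>)) \<le> poly_eval c x" for x
  proof -
    have "\<epsilon> * vertex_sum c \<bar>x\<bar> \<le> (\<Sum>\<alpha>\<in>Vinf c. (c \<alpha> - s \<alpha>) * multipowr \<bar>x\<bar> (emb \<alpha>))"
      unfolding vertex_sum_def sum_distrib_left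
      by (intro sum_mono mult_right_mono \<epsilon>_le multipowr_nonneg)
    moreover have "- (\<Sum>\<beta>\<in>R. \<bar>c \<beta>\<bar> * \<bar>multipow x \<beta>\<bar>) \<le> (\<Sum>\<beta>\<in>R. c \<beta> * multipow x \<beta>)"
      unfolding sum_negf[symmetric] by (intro sum_mono) (simp add: abs_mult[symmetric])
    ultimately show ?thesis
      using C[of x] poly_eval_split[OF fin, of x] vertex_and_degenerate_terms_ge[OF fin C1 mb, of x]
      unfolding R_def s_def by linarith
  qed
  then show ?thesis using \<open>0 < \<epsilon> / 2\<close> by blast
qed

lemma vertex_sum_ge_coordinate:
  assumes fin: "finite (supp c)" and C3: "C3 c" and x: "1 \<le> \<bar>x $ i\<bar>"
  shows "\<bar>x $ i\<bar> \<le> vertex_sum c \<bar>x\<bar>"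
proof -
  obtain k where k: "1 \<le> k" "(\<chi> j. if j = i then 2 * k else 0) \<in> Vinf c"
    using C3 unfolding C3_def by blast
  have "\<bar>x $ i\<bar> \<le> \<bar>x $ i\<bar> ^ (2 * k)"
    using x k(1) by (intro self_le_power) auto
  also have "\<dots> = multipowr \<bar>x\<bar> (emb (\<chi> j. if j = i then 2 * k else 0))"
    by (simp add: multipowr_abs_emb multipow_axis power_abs)
  also have "\<dots> \<le> vertex_sum c \<bar>x\<bar>"
    unfolding vertex_sum_def
    by (rule member_le_sum[OF k(2)]) (use finite_Vinf[OF fin] in \<open>auto simp: multipowr_nonneg\<close>)
  finally show ?thesis .
qed

theorem mainTheorem1:
  fixes c :: "nat^'n::finite \<Rightarrow> real" and lam :: "nat^'n \<Rightarrow> nat^'n \<Rightarrow> real"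
  assumes "finite (supp c)"
    and "C1 c" and "C2 c" and "C3 c"
    and "min_bary_map c lam"
    and "\<forall>\<alpha>\<in>Vinf c. c \<alpha> >
           (\<Sum>a\<in>{a\<in>Dgem c. \<not> even_vec a}. \<bar>c a\<bar> * lam a \<alpha>)
         - (\<Sum>a\<in>{a\<in>Dgem c. even_vec a}. min 0 (c a) * lam a \<alpha>)"
  shows "filterlim (poly_eval c) at_top at_infinity"
proof -
  obtain \<epsilon> K where "0 < \<epsilon>" and lower: "\<And>x. \<epsilon> * vertex_sum c \<bar>x\<bar> - K \<le> poly_eval c x"
    using poly_eval_ge_vertex_sum[OF assms(1,2,5,6)] by blast
  have "filterlim (\<lambda>x. vertex_sum c \<bar>x\<bar>) at_top at_infinity"
    by (rule filterlim_at_infinity_if_coordinate_bound, rule vertex_sum_ge_coordinate[OF assms(1,4)])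
  then have "filterlim (\<lambda>x. - K + \<epsilon> * vertex_sum c \<bar>x\<bar>) at_top at_infinity"
    by (intro filterlim_tendsto_add_at_top[OF tendsto_const]
        filterlim_tendsto_pos_mult_at_top[OF tendsto_const \<open>0 < \<epsilon>\<close>])
  then show ?thesis
    by (rule filterlim_at_top_mono) (use lower in \<open>simp add: algebra_simps\<close>)
qed

end
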